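(* For all integers $n\ge1$ and $i\ge1$, the number of partitions $\lambda\vdash n$ in which the part $i$ occurs with multiplicity exactly $i$ equals the number of partitions $\mu\vdash n$ for which there is an index $s$ with $h_{s,1}(\mu)=s$ and $\mu_s=i$.
   Context: A partition $\mu=(\mu_1\ge\cdots\ge\mu_t>0)$ of $n$ has first-column hook lengths $h_{s,1}(\mu)=\mu_s+(t-s)$ for $1\le s\le t$. *)

theory Defs
  imports Main
begin

text \<open>A partition of n is a weakly decreasing list of positive naturals summing to n,
  written (mu_1 >= ... >= mu_t > 0); list index k corresponds to part mu_(k+1).\<close>
definition partitions :: "nat \<Rightarrow> nat list set" where
  "partitions n = {xs. sorted_wrt (\<ge>) xs \<and> (\<forall>x\<in>set xs. 0 < x) \<and> sum_list xs = n}"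

definition part :: "nat list \<Rightarrow> nat \<Rightarrow> nat" where
  "part mu s = mu ! (s - 1)"

definition hook1 :: "nat list \<Rightarrow> nat \<Rightarrow> nat" where
  "hook1 mu s = part mu s + (length mu - s)"

end

theory Submission
  imports Defs "HOL-Computational_Algebra.Formal_Power_Series"
begin

unbundle fps_syntax

text \<open>
  Fix the number a of parts larger than i and write (q)_k = (1 - q)(1 - q^2)...(1 - q^k).
  A partition in which i occurs exactly i times consists of a parts >= i + 1, the block of
  i copies of i, and a partition into parts < i; its generating function is
  q^(i^2 + a(i+1)) / ((q)_a (q)_(i-1)).
  If h_(s,1)(mu) = s and mu_s = i, then mu has 2s - i parts, so with a = s - i it consists of
  a + i - 1 parts >= i, the part i, and a parts in [1, i]; its generating function is
  q^(i^2 + a(i+1)) [a+i-1 choose a]_q / (q)_(a+i-1).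
  The two agree because [a+b choose a]_q = (q)_(a+b) / ((q)_a (q)_b); summing over a gives
  the theorem.
\<close>

section \<open>Generating functions of weighted sets\<close>

definition gen_fps :: "('a \<Rightarrow> nat) \<Rightarrow> 'a set \<Rightarrow> int fps" where
  "gen_fps w S = Abs_fps (\<lambda>m. int (card {x \<in> S. w x = m}))"

lemma fps_nth_gen_fps [simp]: "gen_fps w S $ m = int (card {x \<in> S. w x = m})"
  by (simp add: gen_fps_def)

lemma gen_fps_cong: "(\<And>x. x \<in> S \<Longrightarrow> w x = w' x) \<Longrightarrow> gen_fps w S = gen_fps w' S"
  by (rule fps_ext) (simp cong: conj_cong)

lemma gen_fps_singleton: "gen_fps w {x} = fps_X ^ w x"
proof (rule fps_ext)
  fix m
  have "{y \<in> {x}. w y = m} = (if m = w x then {x} else {})" by auto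
  then show "gen_fps w {x} $ m = fps_X ^ w x $ m" by (simp add: fps_X_power_nth)
qed

lemma gen_fps_image:
  assumes "inj_on f S"
  shows "gen_fps w (f ` S) = gen_fps (w \<circ> f) S"
proof (rule fps_ext)
  fix m
  have "{y \<in> f ` S. w y = m} = f ` {x \<in> S. w (f x) = m}" by auto
  moreover have "inj_on f {x \<in> S. w (f x) = m}" using assms by (rule inj_on_subset) auto
  ultimately show "gen_fps w (f ` S) $ m = gen_fps (w \<circ> f) S $ m" by (simp add: card_image)
qed

lemma gen_fps_Un:
  assumes "S \<inter> T = {}" "\<And>m. finite {x \<in> S \<union> T. w x = m}"
  shows "gen_fps w (S \<union> T) = gen_fps w S + gen_fps w T"
proof (rule fps_ext)
  fix m
  have "{x \<in> S \<union> T. w x = m} = {x \<in> S. w x = m} \<union> {x \<in> T. w x = m}" by auto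
  moreover have "finite {x \<in> S. w x = m}" "finite {x \<in> T. w x = m}"
    by (rule finite_subset[OF _ assms(2)[of m]], blast)+
  ultimately show "gen_fps w (S \<union> T) $ m = (gen_fps w S + gen_fps w T) $ m"
    using assms(1) by (simp add: card_Un_disjoint disjoint_iff)
qed

lemma fps_X_power_mult_gen_fps: "fps_X ^ c * gen_fps w S = gen_fps (\<lambda>x. w x + c) S"
proof (rule fps_ext)
  fix m
  have "{x \<in> S. w x + c = m} = (if m < c then {} else {x \<in> S. w x = m - c})" by auto
  then show "(fps_X ^ c * gen_fps w S) $ m = gen_fps (\<lambda>x. w x + c) S $ m"
    by (simp add: fps_X_power_mult_nth)
qed

lemma gen_fps_Times:
  assumes "\<And>m. finite {x \<in> S. w x = m}" "\<And>m. finite {y \<in> T. u y = m}"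
  shows "gen_fps w S * gen_fps u T = gen_fps (\<lambda>(x, y). w x + u y) (S \<times> T)"
proof (rule fps_ext)
  fix m
  have fibre: "{p \<in> S \<times> T. (\<lambda>(x, y). w x + u y) p = m}
      = (\<Union>j\<in>{0..m}. {x \<in> S. w x = j} \<times> {y \<in> T. u y = m - j})" by auto
  have "card (\<Union>j\<in>{0..m}. {x \<in> S. w x = j} \<times> {y \<in> T. u y = m - j})
      = (\<Sum>j=0..m. card ({x \<in> S. w x = j} \<times> {y \<in> T. u y = m - j}))"
    by (rule card_UN_disjoint) (auto simp: assms)
  then have "int (card {p \<in> S \<times> T. (\<lambda>(x, y). w x + u y) p = m})
      = (\<Sum>j=0..m. int (card {x \<in> S. w x = j}) * int (card {y \<in> T. u y = m - j}))"
    unfolding fibre card_cartesian_product by simp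
  then show "(gen_fps w S * gen_fps u T) $ m = gen_fps (\<lambda>(x, y). w x + u y) (S \<times> T) $ m"
    unfolding fps_nth_gen_fps fps_mult_nth by presburger
qed

section \<open>Weakly decreasing lists\<close>

(* Padded with zeros, the lists in dec_lists k (\<lambda>_. True) are the partitions into at most k parts. *)
definition dec_lists :: "nat \<Rightarrow> (nat \<Rightarrow> bool) \<Rightarrow> nat list set" where
  "dec_lists k P = {v. length v = k \<and> sorted_wrt (\<ge>) v \<and> (\<forall>x\<in>set v. P x)}"

definition part_lists :: "nat list set" where
  "part_lists = {v. sorted_wrt (\<ge>) v \<and> (\<forall>x\<in>set v. 0 < x)}"

definition bounded_partitions :: "nat \<Rightarrow> nat list set" where
  "bounded_partitions b = {v \<in> part_lists. \<forall>x\<in>set v. x \<le> b}"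

lemma partitions_eq: "partitions n = {v \<in> part_lists. sum_list v = n}"
  by (auto simp: partitions_def part_lists_def)

lemma length_le_sum_list: "\<forall>x\<in>set v. 0 < x \<Longrightarrow> length v \<le> sum_list (v :: nat list)"
  by (induction v) auto

lemma finite_length_sum_list_le: "finite {v :: nat list. length v \<le> L \<and> sum_list v \<le> N}"
proof (rule finite_subset)
  show "{v :: nat list. length v \<le> L \<and> sum_list v \<le> N} \<subseteq> {v. set v \<subseteq> {..N} \<and> length v \<le> L}"
    using member_le_sum_list by fastforce
qed (rule finite_lists_length_le[OF finite_atMost])

lemma finite_dec_lists_sum_list: "finite {v \<in> dec_lists k P. sum_list v = m}"
  by (rule finite_subset[OF _ finite_length_sum_list_le[of k m]]) (auto simp: dec_lists_def)

lemma finite_part_lists_sum_list: "finite {v \<in> part_lists. sum_list v = m}"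
  by (rule finite_subset[OF _ finite_length_sum_list_le[of m m]])
    (auto simp: part_lists_def intro!: length_le_sum_list)

lemma finite_bounded_partitions_sum_list: "finite {v \<in> bounded_partitions b. sum_list v = m}"
  by (rule finite_subset[OF _ finite_part_lists_sum_list[of m]]) (auto simp: bounded_partitions_def)

lemma sorted_wrt_ge_replicate: "sorted_wrt (\<ge>) (replicate n (x :: nat))"
  by (induction n) auto

lemma dec_lists_0: "dec_lists 0 P = {[]}"
  by (auto simp: dec_lists_def)

lemma dec_lists_le_0: "dec_lists k (\<lambda>x. x \<le> 0) = {replicate k 0}"
  by (auto simp: dec_lists_def sorted_wrt_ge_replicate intro: replicate_eqI)

lemma bounded_partitions_0: "bounded_partitions 0 = {[]}"
  by (auto simp: bounded_partitions_def part_lists_def) (metis gr_implies_not0 list.set_intros(1) neq_Nil_conv)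

lemma sorted_wrt_ge_map_minus: "sorted_wrt (\<ge>) v \<Longrightarrow> sorted_wrt (\<ge>) (map (\<lambda>x. x - c) (v :: nat list))"
  unfolding sorted_wrt_map by (auto elim: sorted_wrt_mono_rel[rotated])

lemma sorted_wrt_ge_map_plus: "sorted_wrt (\<ge>) v \<Longrightarrow> sorted_wrt (\<ge>) (map (\<lambda>x. x + c) (v :: nat list))"
  unfolding sorted_wrt_map by (rule sorted_wrt_mono_rel[rotated]) auto

lemma map_plus_map_minus:
  "\<forall>x\<in>set xs. c \<le> x \<Longrightarrow> map (\<lambda>x. x + c) (map (\<lambda>x. x - c) xs) = (xs :: nat list)"
  by (induction xs) auto

lemma map_Suc_map_minus_1: "\<forall>x\<in>set xs. 0 < x \<Longrightarrow> map Suc (map (\<lambda>x. x - 1) xs) = xs"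
  by (induction xs) auto

lemma dec_lists_Suc:
  assumes "P 0"
  shows "dec_lists (Suc k) P
    = (\<lambda>v. v @ [0]) ` dec_lists k P \<union> map Suc ` dec_lists (Suc k) (\<lambda>x. P (Suc x))"
proof (intro equalityI subsetI)
  fix v assume v: "v \<in> dec_lists (Suc k) P"
  then have sorted: "sorted_wrt (\<ge>) v" and len: "length v = Suc k" and P: "\<forall>x\<in>set v. P x"
    by (auto simp: dec_lists_def)
  show "v \<in> (\<lambda>v. v @ [0]) ` dec_lists k P \<union> map Suc ` dec_lists (Suc k) (\<lambda>x. P (Suc x))"
  proof (cases "0 \<in> set v")
    case True
    have "v \<noteq> []" using len by auto
    then have v_eq: "v = butlast v @ [last v]" by simp
    have "\<forall>x\<in>set (butlast v). last v \<le> x"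
      using sorted by (subst (asm) v_eq) (auto simp: sorted_wrt_append)
    then have "last v = 0"
      using True by (subst (asm) (2) v_eq) (auto simp: sorted_wrt_append)
    moreover have "butlast v \<in> dec_lists k P"
      using sorted P len by (subst (asm) (1 2 3) v_eq) (auto simp: dec_lists_def sorted_wrt_append)
    ultimately show ?thesis using v_eq by (metis UnI1 image_eqI)
  next
    case False
    then have "v = map Suc (map (\<lambda>x. x - 1) v)"
      by (metis map_Suc_map_minus_1 gr0I)
    moreover have "map (\<lambda>x. x - 1) v \<in> dec_lists (Suc k) (\<lambda>x. P (Suc x))"
      using sorted P len False by (auto simp: dec_lists_def sorted_wrt_ge_map_minus)
        (metis Suc_pred gr0I)
    ultimately show ?thesis by blast
  qed
qed (use assms in \<open>auto simp: dec_lists_def sorted_wrt_append sorted_wrt_map\<close>)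

lemma bounded_partitions_Suc:
  "bounded_partitions (Suc b) = bounded_partitions b \<union> (#) (Suc b) ` bounded_partitions (Suc b)"
proof (intro equalityI subsetI)
  fix v assume v: "v \<in> bounded_partitions (Suc b)"
  show "v \<in> bounded_partitions b \<union> (#) (Suc b) ` bounded_partitions (Suc b)"
  proof (cases "Suc b \<in> set v")
    case True
    then obtain x w where "v = x # w" by (cases v) auto
    with v True have "x = Suc b" "w \<in> bounded_partitions (Suc b)"
      by (auto simp: bounded_partitions_def part_lists_def)
    with \<open>v = x # w\<close> show ?thesis by blast
  next
    case False
    with v show ?thesis by (auto simp: bounded_partitions_def le_Suc_eq)
  qed
qed (auto simp: bounded_partitions_def part_lists_def)

lemma gen_fps_dec_lists_Suc:
  assumes "P 0"
  shows "gen_fps sum_list (dec_lists (Suc k) P) = gen_fps sum_list (dec_lists k P)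
    + fps_X ^ Suc k * gen_fps sum_list (dec_lists (Suc k) (\<lambda>x. P (Suc x)))"
proof -
  note split = dec_lists_Suc[of P k, OF assms]
  have "gen_fps sum_list (dec_lists (Suc k) P) = gen_fps sum_list ((\<lambda>v. v @ [0]) ` dec_lists k P)
      + gen_fps sum_list (map Suc ` dec_lists (Suc k) (\<lambda>x. P (Suc x)))"
    unfolding split
  proof (rule gen_fps_Un)
    show "(\<lambda>v. v @ [0]) ` dec_lists k P \<inter> map Suc ` dec_lists (Suc k) (\<lambda>x. P (Suc x)) = {}"
      by (force dest: arg_cong[where f = set])
  qed (simp add: finite_dec_lists_sum_list split[symmetric])
  also have "gen_fps sum_list ((\<lambda>v. v @ [0]) ` dec_lists k P) = gen_fps sum_list (dec_lists k P)"
    by (simp add: gen_fps_image inj_on_def comp_def)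
  also have "gen_fps sum_list (map Suc ` dec_lists (Suc k) (\<lambda>x. P (Suc x)))
      = gen_fps (\<lambda>v. sum_list v + Suc k) (dec_lists (Suc k) (\<lambda>x. P (Suc x)))"
    by (auto simp: gen_fps_image inj_on_def dec_lists_def sum_list_Suc[of "\<lambda>x. x", simplified]
        intro: gen_fps_cong)
  finally show ?thesis unfolding fps_X_power_mult_gen_fps .
qed

lemma gen_fps_bounded_partitions_Suc:
  "gen_fps sum_list (bounded_partitions (Suc b)) = gen_fps sum_list (bounded_partitions b)
    + fps_X ^ Suc b * gen_fps sum_list (bounded_partitions (Suc b))"
proof -
  note split = bounded_partitions_Suc[of b]
  have "gen_fps sum_list (bounded_partitions (Suc b))
      = gen_fps sum_list (bounded_partitions b \<union> (#) (Suc b) ` bounded_partitions (Suc b))"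
    using split by (rule arg_cong)
  also have "\<dots> = gen_fps sum_list (bounded_partitions b)
      + gen_fps sum_list ((#) (Suc b) ` bounded_partitions (Suc b))"
  proof (rule gen_fps_Un)
    show "bounded_partitions b \<inter> (#) (Suc b) ` bounded_partitions (Suc b) = {}"
      by (auto simp: bounded_partitions_def)
  qed (simp only: split[symmetric] finite_bounded_partitions_sum_list)
  also have "gen_fps sum_list ((#) (Suc b) ` bounded_partitions (Suc b))
      = gen_fps (\<lambda>v. sum_list v + Suc b) (bounded_partitions (Suc b))"
    by (simp add: gen_fps_image comp_def add.commute)
  finally show ?thesis unfolding fps_X_power_mult_gen_fps .
qed

section \<open>q-Pochhammer identities\<close>

definition qpoch :: "nat \<Rightarrow> int fps" where
  "qpoch k = (\<Prod>j=1..k. 1 - fps_X ^ j)"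

lemma qpoch_0: "qpoch 0 = 1"
  by (simp add: qpoch_def)

lemma qpoch_Suc: "qpoch (Suc k) = qpoch k * (1 - fps_X ^ Suc k)"
  by (simp add: qpoch_def)

lemma qpoch_nonzero: "qpoch k \<noteq> 0"
proof -
  have "qpoch k $ 0 = 1" by (induction k) (simp_all add: qpoch_0 qpoch_Suc)
  then show ?thesis by auto
qed

lemma mult_qpoch_Suc_eq_1:
  assumes "G = F + fps_X ^ Suc k * G" "F * qpoch k = 1"
  shows "G * qpoch (Suc k) = 1"
proof -
  have "G * (1 - fps_X ^ Suc k) = F"
    using assms(1) by (simp add: algebra_simps eq_diff_eq[symmetric])
  then have "G * qpoch (Suc k) = F * qpoch k"
    by (simp add: qpoch_Suc mult_ac)
  then show ?thesis using assms(2) by simp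
qed

lemma gen_fps_dec_lists_mult_qpoch: "gen_fps sum_list (dec_lists k (\<lambda>_. True)) * qpoch k = 1"
proof (induction k)
  case 0
  show ?case by (simp add: dec_lists_0 gen_fps_singleton qpoch_0)
next
  case (Suc k)
  show ?case by (rule mult_qpoch_Suc_eq_1[OF gen_fps_dec_lists_Suc Suc]) simp
qed

lemma gen_fps_bounded_partitions_mult_qpoch: "gen_fps sum_list (bounded_partitions b) * qpoch b = 1"
proof (induction b)
  case 0
  show ?case by (simp add: bounded_partitions_0 gen_fps_singleton qpoch_0)
next
  case (Suc b)
  show ?case by (rule mult_qpoch_Suc_eq_1[OF gen_fps_bounded_partitions_Suc Suc])
qed

(* That is, dec_lists k (\<lambda>x. x \<le> b) is counted by the Gaussian binomial [k + b choose k]_q. *)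
lemma gen_fps_dec_lists_le_mult_qpoch:
  "gen_fps sum_list (dec_lists k (\<lambda>x. x \<le> b)) * qpoch k * qpoch b = qpoch (k + b)"
proof (induction k arbitrary: b)
  case 0
  show ?case by (simp add: dec_lists_0 gen_fps_singleton qpoch_0)
next
  case (Suc k)
  note IH_k = Suc.IH
  show ?case
  proof (induction b)
    case 0
    show ?case unfolding dec_lists_le_0 gen_fps_singleton by (simp add: qpoch_0 sum_list_replicate)
  next
    case (Suc b)
    let ?G = "\<lambda>k b. gen_fps sum_list (dec_lists k (\<lambda>x. x \<le> b))"
    have rec: "?G (Suc k) (Suc b) = ?G k (Suc b) + fps_X ^ Suc k * ?G (Suc k) b"
      using gen_fps_dec_lists_Suc[of "\<lambda>x. x \<le> Suc b" k] by simp
    have "?G (Suc k) (Suc b) * qpoch (Suc k) * qpoch (Suc b)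
      = (?G k (Suc b) * qpoch k * qpoch (Suc b)) * (1 - fps_X ^ Suc k)
        + fps_X ^ Suc k * (?G (Suc k) b * qpoch (Suc k) * qpoch b) * (1 - fps_X ^ Suc b)"
      by (simp add: rec qpoch_Suc algebra_simps)
    also have "\<dots> = qpoch (Suc (k + b)) * (1 - fps_X ^ Suc k * fps_X ^ Suc b)"
      using Suc.IH IH_k[of "Suc b"] by (simp add: algebra_simps)
    also have "\<dots> = qpoch (Suc k + Suc b)"
      by (simp add: qpoch_Suc power_add[symmetric])
    finally show ?case .
  qed
qed

lemma gen_fps_dec_lists_mult_bounded_partitions:
  "gen_fps sum_list (dec_lists a (\<lambda>_. True)) * gen_fps sum_list (bounded_partitions b)
 = gen_fps sum_list (dec_lists (a + b) (\<lambda>_. True)) * gen_fps sum_list (dec_lists a (\<lambda>x. x \<le> b))"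
proof -
  let ?D = "\<lambda>k. gen_fps sum_list (dec_lists k (\<lambda>_. True))"
  let ?c = "qpoch a * qpoch b * qpoch (a + b)"
  have "?D a * gen_fps sum_list (bounded_partitions b) * ?c
      = (?D a * qpoch a) * (gen_fps sum_list (bounded_partitions b) * qpoch b) * qpoch (a + b)"
    by (simp add: algebra_simps)
  also have "\<dots> = (?D (a + b) * qpoch (a + b))
      * (gen_fps sum_list (dec_lists a (\<lambda>x. x \<le> b)) * qpoch a * qpoch b)"
    by (simp only: gen_fps_dec_lists_mult_qpoch gen_fps_bounded_partitions_mult_qpoch
        gen_fps_dec_lists_le_mult_qpoch mult_1)
  also have "\<dots> = ?D (a + b) * gen_fps sum_list (dec_lists a (\<lambda>x. x \<le> b)) * ?c"
    by (simp add: algebra_simps)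
  finally show ?thesis using qpoch_nonzero by simp
qed

section \<open>The two families of partitions\<close>

lemma sorted_wrt_ge_split:
  "sorted_wrt (\<ge>) xs
    \<Longrightarrow> xs = filter (\<lambda>x. i < x) xs @ replicate (count_list xs i) i @ filter (\<lambda>x. x < i) (xs :: nat list)"
proof (induction xs)
  case (Cons x xs)
  then have IH: "xs = filter (\<lambda>x. i < x) xs @ replicate (count_list xs i) i @ filter (\<lambda>x. x < i) xs"
    and le: "\<forall>y\<in>set xs. y \<le> x" by auto
  show ?case
  proof (cases "i < x")
    case False
    then have "filter (\<lambda>x. i < x) xs = []" using le by (auto simp: filter_empty_conv)
    moreover have "x < i \<Longrightarrow> count_list xs i = 0" using le by (auto simp: count_list_0_iff)
    ultimately show ?thesis using IH False by auto
  qed (use IH in simp)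
qed simp

fun join_mult :: "nat \<Rightarrow> nat list \<times> nat list \<Rightarrow> nat list" where
  "join_mult i (A, B) = map (\<lambda>x. x + Suc i) A @ replicate i i @ B"

lemma sum_list_join_mult:
  "sum_list (join_mult i (A, B)) = sum_list A + sum_list B + (i * i + length A * Suc i)"
  by (induction A) (simp_all add: sum_list_replicate algebra_simps)

lemma inj_on_join_mult: "inj_on (join_mult i) (dec_lists a P \<times> Q)"
  by (auto simp: inj_on_def dec_lists_def)

lemma multiplicity_part_lists_eq_image:
  "{lam \<in> part_lists. count_list lam i = i \<and> length (filter (\<lambda>x. i < x) lam) = a}
    = join_mult i ` (dec_lists a (\<lambda>_. True) \<times> bounded_partitions (i - 1))"
proof (intro equalityI subsetI)
  fix lam assume lam: "lam \<in> {lam \<in> part_lists. count_list lam i = i \<and> length (filter (\<lambda>x. i < x) lam) = a}"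
  then have sorted: "sorted_wrt (\<ge>) lam" and pos: "\<forall>x\<in>set lam. 0 < x" and count: "count_list lam i = i"
    by (auto simp: part_lists_def)
  let ?A = "map (\<lambda>x. x - Suc i) (filter (\<lambda>x. i < x) lam)" and ?B = "filter (\<lambda>x. x < i) lam"
  have "map (\<lambda>x. x + Suc i) ?A = filter (\<lambda>x. i < x) lam"
    by (rule map_plus_map_minus) auto
  then have "lam = join_mult i (?A, ?B)"
    using sorted_wrt_ge_split[OF sorted, of i] count by simp
  moreover have "?A \<in> dec_lists a (\<lambda>_. True)"
    using lam sorted by (simp add: dec_lists_def sorted_wrt_ge_map_minus sorted_wrt_filter)
  moreover have "?B \<in> bounded_partitions (i - 1)"
    using sorted pos by (auto simp: bounded_partitions_def part_lists_def sorted_wrt_filter)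
  ultimately show "lam \<in> join_mult i ` (dec_lists a (\<lambda>_. True) \<times> bounded_partitions (i - 1))"
    by blast
next
  fix lam assume "lam \<in> join_mult i ` (dec_lists a (\<lambda>_. True) \<times> bounded_partitions (i - 1))"
  then obtain A B where lam: "lam = join_mult i (A, B)" and A: "A \<in> dec_lists a (\<lambda>_. True)"
    and B: "B \<in> bounded_partitions (i - 1)" by auto
  have B_lt: "\<forall>x\<in>set B. 0 < x \<and> x < i" using B by (force simp: bounded_partitions_def part_lists_def)
  have count_replicate: "count_list (replicate n x) x = n" for n and x :: nat
    by (induction n) auto
  have "sorted_wrt (\<ge>) lam"
    using A B B_lt sorted_wrt_ge_replicate[of i i] sorted_wrt_ge_map_plus[of A "Suc i"]
    by (auto simp: lam dec_lists_def bounded_partitions_def part_lists_def sorted_wrt_append less_imp_le)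
  moreover have "count_list lam i = i" "filter (\<lambda>x. i < x) lam = map (\<lambda>x. x + Suc i) A"
    using B_lt count_replicate by (auto simp: lam filter_empty_conv count_list_0_iff)
  ultimately show "lam \<in> {lam \<in> part_lists. count_list lam i = i \<and> length (filter (\<lambda>x. i < x) lam) = a}"
    using A B_lt by (auto simp: lam part_lists_def dec_lists_def)
qed

lemma gen_fps_multiplicity_part_lists:
  "gen_fps sum_list {lam \<in> part_lists. count_list lam i = i \<and> length (filter (\<lambda>x. i < x) lam) = a}
    = fps_X ^ (i * i + a * Suc i)
      * (gen_fps sum_list (dec_lists a (\<lambda>_. True)) * gen_fps sum_list (bounded_partitions (i - 1)))"
proof -
  let ?D = "dec_lists a (\<lambda>_. True) \<times> bounded_partitions (i - 1)"
  have "gen_fps sum_list (join_mult i ` ?D) = gen_fps (sum_list \<circ> join_mult i) ?D"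
    by (rule gen_fps_image[OF inj_on_join_mult])
  also have "\<dots> = gen_fps (\<lambda>p. (\<lambda>(A, B). sum_list A + sum_list B) p + (i * i + a * Suc i)) ?D"
    by (rule gen_fps_cong) (auto simp del: join_mult.simps simp: sum_list_join_mult dec_lists_def)
  finally show ?thesis
    by (simp only: multiplicity_part_lists_eq_image fps_X_power_mult_gen_fps gen_fps_Times
        finite_dec_lists_sum_list finite_bounded_partitions_sum_list)
qed

(* Position s = a + i carries mu_s = i; the a + i - 1 parts before it are >= i and the a parts
   after it lie in [1, i]. *)
fun join_hook :: "nat \<Rightarrow> nat list \<times> nat list \<Rightarrow> nat list" where
  "join_hook i (T, C) = map (\<lambda>x. x + i) T @ i # map Suc C"

lemma sum_list_join_hook:
  "sum_list (join_hook i (T, C)) = sum_list T + sum_list C + (i * length T + i + length C)"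
  by (simp add: sum_list_addf sum_list_triv sum_list_Suc[of "\<lambda>x. x", simplified])

lemma inj_on_join_hook: "inj_on (join_hook i) (dec_lists k P \<times> Q)"
  by (auto simp: inj_on_def dec_lists_def)

lemma hook1_eq_self_iff: "s \<le> length mu \<Longrightarrow> hook1 mu s = s \<longleftrightarrow> part mu s + length mu = 2 * s"
  by (auto simp: hook1_def)

lemma hook_part_lists_eq_image:
  assumes "1 \<le> i"
  shows "{mu \<in> part_lists. length mu = 2 * a + i \<and> (\<exists>s\<in>{1..length mu}. hook1 mu s = s \<and> part mu s = i)}
    = join_hook i ` (dec_lists (a + (i - 1)) (\<lambda>_. True) \<times> dec_lists a (\<lambda>x. x \<le> i - 1))"
proof (intro equalityI subsetI)
  fix mu
  assume "mu \<in> {mu \<in> part_lists. length mu = 2 * a + i \<and> (\<exists>s\<in>{1..length mu}. hook1 mu s = s \<and> part mu s = i)}"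
  then obtain s where mu: "mu \<in> part_lists" "length mu = 2 * a + i" "s \<in> {1..length mu}"
    "hook1 mu s = s" "part mu s = i" by auto
  then have sorted: "sorted_wrt (\<ge>) mu" and pos: "\<forall>x\<in>set mu. 0 < x"
    by (auto simp: part_lists_def)
  let ?p = "a + (i - 1)"
  have "s = a + i" using mu hook1_eq_self_iff[of s mu] by auto
  then have "mu ! ?p = i" using mu(5) assms by (simp add: Defs.part_def)
  then have drop_eq: "i # drop (Suc ?p) mu = drop ?p mu"
    using Cons_nth_drop_Suc[of ?p mu] mu(2) assms by simp
  then have mu_eq: "take ?p mu @ i # drop (Suc ?p) mu = mu"
    by simp
  have "sorted_wrt (\<ge>) (take ?p mu @ i # drop (Suc ?p) mu)"
    using sorted by (simp only: mu_eq)
  then have ge: "\<forall>x\<in>set (take ?p mu). i \<le> x" and le: "\<forall>y\<in>set (drop (Suc ?p) mu). y \<le> i"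
    unfolding sorted_wrt_append sorted_wrt.simps(2) by (meson list.set_intros(1))+
  let ?T = "map (\<lambda>x. x - i) (take ?p mu)" and ?C = "map (\<lambda>x. x - 1) (drop (Suc ?p) mu)"
  have "map Suc ?C = drop (Suc ?p) mu"
    by (rule map_Suc_map_minus_1) (use pos in \<open>blast dest: in_set_dropD\<close>)
  moreover have "map (\<lambda>x. x + i) ?T = take ?p mu" by (rule map_plus_map_minus[OF ge])
  ultimately have "mu = join_hook i (?T, ?C)" using mu_eq by simp
  moreover have "?T \<in> dec_lists (a + (i - 1)) (\<lambda>_. True)" "?C \<in> dec_lists a (\<lambda>x. x \<le> i - 1)"
    using sorted le mu(2) assms
    by (auto simp: dec_lists_def sorted_wrt_ge_map_minus sorted_wrt_take sorted_wrt_drop)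
  ultimately show "mu \<in> join_hook i ` (dec_lists (a + (i - 1)) (\<lambda>_. True) \<times> dec_lists a (\<lambda>x. x \<le> i - 1))"
    by blast
next
  fix mu assume "mu \<in> join_hook i ` (dec_lists (a + (i - 1)) (\<lambda>_. True) \<times> dec_lists a (\<lambda>x. x \<le> i - 1))"
  then obtain T C where mu: "mu = join_hook i (T, C)" and T: "T \<in> dec_lists (a + (i - 1)) (\<lambda>_. True)"
    and C: "C \<in> dec_lists a (\<lambda>x. x \<le> i - 1)" by auto
  have "sorted_wrt (\<ge>) mu"
    using T C assms sorted_wrt_ge_map_plus[of T i] sorted_wrt_ge_map_plus[of C 1]
    by (auto simp: mu dec_lists_def sorted_wrt_append)
  moreover have len: "length mu = 2 * a + i" using T C assms by (simp add: mu dec_lists_def)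
  moreover have "part mu (a + i) = i"
    using T assms by (simp add: mu Defs.part_def dec_lists_def nth_append)
  ultimately show "mu \<in> {mu \<in> part_lists. length mu = 2 * a + i \<and> (\<exists>s\<in>{1..length mu}. hook1 mu s = s \<and> part mu s = i)}"
    using assms by (auto simp: mu part_lists_def hook1_def intro!: bexI[of _ "a + i"])
qed

lemma gen_fps_hook_part_lists:
  assumes "1 \<le> i"
  shows "gen_fps sum_list
      {mu \<in> part_lists. length mu = 2 * a + i \<and> (\<exists>s\<in>{1..length mu}. hook1 mu s = s \<and> part mu s = i)}
    = fps_X ^ (i * i + a * Suc i)
      * (gen_fps sum_list (dec_lists (a + (i - 1)) (\<lambda>_. True))
         * gen_fps sum_list (dec_lists a (\<lambda>x. x \<le> i - 1)))"
proof -
  let ?D = "dec_lists (a + (i - 1)) (\<lambda>_. True) \<times> dec_lists a (\<lambda>x. x \<le> i - 1)"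
  have weight: "i * (a + (i - 1)) + i + a = i * i + a * Suc i"
    using assms by (cases i) (simp_all add: algebra_simps)
  have "gen_fps sum_list (join_hook i ` ?D) = gen_fps (sum_list \<circ> join_hook i) ?D"
    by (rule gen_fps_image[OF inj_on_join_hook])
  also have "\<dots> = gen_fps (\<lambda>p. (\<lambda>(T, C). sum_list T + sum_list C) p + (i * i + a * Suc i)) ?D"
  proof (rule gen_fps_cong)
    fix p assume "p \<in> ?D"
    then obtain T C where p: "p = (T, C)" "length T = a + (i - 1)" "length C = a"
      by (auto simp: dec_lists_def)
    show "(sum_list \<circ> join_hook i) p = (\<lambda>(T, C). sum_list T + sum_list C) p + (i * i + a * Suc i)"
      unfolding p(1) comp_apply sum_list_join_hook p(2,3) weight by simp
  qed
  finally show ?thesis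
    by (simp only: hook_part_lists_eq_image[OF assms] fps_X_power_mult_gen_fps gen_fps_Times
        finite_dec_lists_sum_list)
qed

lemma gen_fps_multiplicity_eq_hook:
  assumes "1 \<le> i"
  shows "gen_fps sum_list {lam \<in> part_lists. count_list lam i = i \<and> length (filter (\<lambda>x. i < x) lam) = a}
    = gen_fps sum_list
      {mu \<in> part_lists. length mu = 2 * a + i \<and> (\<exists>s\<in>{1..length mu}. hook1 mu s = s \<and> part mu s = i)}"
  by (simp only: gen_fps_multiplicity_part_lists gen_fps_hook_part_lists[OF assms]
      gen_fps_dec_lists_mult_bounded_partitions)

lemma finite_partitions: "finite (partitions n)"
  using finite_part_lists_sum_list by (simp add: partitions_eq)

lemma length_le_of_mem_partitions: "v \<in> partitions n \<Longrightarrow> length v \<le> n"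
  using length_le_sum_list by (auto simp: partitions_def)

lemma card_multiplicity_eq_card_hook:
  assumes "1 \<le> i"
  shows "card {lam \<in> partitions n. count_list lam i = i \<and> length (filter (\<lambda>x. i < x) lam) = a}
    = card {mu \<in> partitions n. length mu = 2 * a + i \<and> (\<exists>s\<in>{1..length mu}. hook1 mu s = s \<and> part mu s = i)}"
proof -
  have "{v \<in> partitions n. P v} = {v \<in> {v \<in> part_lists. P v}. sum_list v = n}" for P
    by (auto simp: partitions_eq)
  then show ?thesis
    using arg_cong[OF gen_fps_multiplicity_eq_hook[OF assms, of a], of "\<lambda>f. f $ n"] by simp
qed

lemma hook1_eq_self_length_div:
  assumes "s \<in> {1..length mu}" "hook1 mu s = s"
  shows "(length mu - part mu s) div 2 = a \<longleftrightarrow> length mu = 2 * a + part mu s"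
proof -
  have "length mu = 2 * (length mu - s) + part mu s" using assms hook1_eq_self_iff[of s mu] by arith
  then show ?thesis by (metis add_right_cancel mult_2 nonzero_mult_div_cancel_left
        zero_neq_numeral add_diff_cancel_right')
qed

lemma card_eq_sum_card_fibres:
  fixes f :: "'a \<Rightarrow> nat"
  assumes "finite S" "\<And>x. x \<in> S \<Longrightarrow> f x \<le> n"
  shows "card S = (\<Sum>a\<le>n. card {x \<in> S. f x = a})"
proof -
  have "(\<Sum>a\<le>n. \<Sum>x\<in>{x \<in> S. f x = a}. 1) = (\<Sum>x\<in>S. 1 :: nat)"
    by (rule sum.group) (use assms in auto)
  then show ?thesis by simp
qed

theorem proposition2p3:
  fixes n i :: nat
  assumes "n \<ge> 1" and "i \<ge> 1"
  shows "card {lam \<in> partitions n. count_list lam i = i}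
       = card {mu \<in> partitions n. \<exists>s\<in>{1..length mu}. hook1 mu s = s \<and> part mu s = i}"
proof -
  let ?L = "{lam \<in> partitions n. count_list lam i = i}"
  let ?M = "{mu \<in> partitions n. \<exists>s\<in>{1..length mu}. hook1 mu s = s \<and> part mu s = i}"
  have "card ?L = (\<Sum>a\<le>n. card {lam \<in> ?L. length (filter (\<lambda>x. i < x) lam) = a})"
    by (rule card_eq_sum_card_fibres)
      (auto simp: finite_partitions intro: le_trans[OF length_filter_le length_le_of_mem_partitions])
  also have "\<dots> = (\<Sum>a\<le>n. card {mu \<in> ?M. (length mu - i) div 2 = a})"
  proof (rule sum.cong[OF refl])
    fix a
    have "{mu \<in> ?M. (length mu - i) div 2 = a}
      = {mu \<in> partitions n. length mu = 2 * a + i \<and> (\<exists>s\<in>{1..length mu}. hook1 mu s = s \<and> part mu s = i)}"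
      using hook1_eq_self_length_div by blast
    then show "card {lam \<in> ?L. length (filter (\<lambda>x. i < x) lam) = a} = card {mu \<in> ?M. (length mu - i) div 2 = a}"
      using card_multiplicity_eq_card_hook[OF assms(2)] by (simp add: conj_ac)
  qed
  also have "\<dots> = card ?M"
    by (rule card_eq_sum_card_fibres[symmetric])
      (auto simp: finite_partitions intro: le_trans[OF div_le_dividend]
        le_trans[OF diff_le_self length_le_of_mem_partitions])
  finally show ?thesis .
qed

end
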